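(* Fix an integer $w\ge 3$ and set $f_w(x,y)=\sum_{j=0}^{w-2}x^jy^{w-2-j}$. Writing $\tilde a=a-1$, $\tilde b=b-1$ and letting all sums run over positive integers $a,b$ with $a+b=w$, the following polynomial identities in $x,y$ hold: \begin{align*} \sum \zeta_\sqcup(a,b)(x+y)^{\tilde a}(y^{\tilde b}+x^{\tilde b}) &=\sum \zeta_*(a,b)(x^{\tilde a}y^{\tilde b}+y^{\tilde a}x^{\tilde b})+\zeta(w)f_w(x,y),\\ \sum (x+y)^{\tilde a}\big(\zeta_\sqcup(a,\bar b)y^{\tilde b}+\zeta(\bar a,\bar b)x^{\tilde b}\big) &=\sum\big(\zeta_*(a,\bar b)x^{\tilde a}y^{\tilde b}+\zeta(\bar a,b)y^{\tilde a}x^{\tilde b}\big)+\zeta(\bar w)f_w(x,y),\\ \sum \zeta(\bar a,b)(x+y)^{\tilde a}(y^{\tilde b}+x^{\tilde b}) &=\sum \zeta(\bar a,\bar b)(x^{\tilde a}y^{\tilde b}+y^{\tilde a}x^{\tilde b})+\zeta(w)f_w(x,y). \end{align*} (The regularized values are polynomials in a variable $T$, and the identities hold in $\mathbb{R}[T][x,y]$.)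
   Context: Euler sums: for positive integers $s_1,\dots,s_d$ and signs $z_1,\dots,z_d\in\{\pm1\}$, $\zeta(s_1,\dots,s_d;z_1,\dots,z_d)=\sum_{n_1>\dots>n_d>0}\frac{z_1^{n_1}\cdots z_d^{n_d}}{n_1^{s_1}\cdots n_d^{s_d}}$, convergent iff $(s_1,z_1)\ne(1,1)$. A bar over an argument $s_j$ means $z_j=-1$, no bar means $z_j=1$; e.g. $\zeta(\bar a,b)=\zeta(a,b;-1,1)$, $\zeta(\bar w)=\zeta(w;-1)$. Regularized values: the truncated sum $\zeta^{(M)}(\mathbf s;\mathbf z)=\sum_{M\ge n_1>\dots>n_d>0}\frac{z_1^{n_1}\cdots z_d^{n_d}}{n_1^{s_1}\cdots n_d^{s_d}}$ has, as $M\to\infty$, an expansion $P(\log M+\gamma)+o(1)$ with $P$ a polynomial ($\gamma$ Euler's constant); the stuffle-regularized value is $\zeta_*(\mathbf s;\mathbf z)=P(T)\in\mathbb{R}[T]$. With $a_k=\prod_{j\le k}z_j$, the iterated integral $I^{(\varepsilon)}(\mathbf s;\mathbf z)=\int_0^{1-\varepsilon}\left(\frac{dt}{t}\right)^{s_1-1}\frac{dt}{a_1-t}\cdots\left(\frac{dt}{t}\right)^{s_d-1}\frac{dt}{a_d-t}$ (iterated integral over $1-\varepsilon>t_1>t_2>\dots>0$, forms read left to right) has, as $\varepsilon\to0^+$, an expansion $Q(-\log\varepsilon)+o(1)$ with $Q$ a polynomial; the shuffle-regularized value is $\zeta_\sqcup(\mathbf s;\mathbf z)=Q(T)$. For convergent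 (admissible) indices both regularized values equal the Euler sum, and $\zeta_\sqcup(s)=\zeta_*(s)$ in depth one. *)

theory Defs
  imports "HOL-Analysis.Analysis" "HOL-Computational_Algebra.Polynomial"
begin

text \<open>An index of an Euler sum is a list of pairs (s_j, z_j) with s_j a positive
integer and z_j = 1 or z_j = -1 (a bar means z_j = -1).\<close>

type_synonym eindex = "(nat \<times> real) list"

fun esum_trunc :: "eindex \<Rightarrow> nat \<Rightarrow> real" where
  "esum_trunc [] M = 1"
| "esum_trunc ((s, z) # r) M =
     (\<Sum>n = 1..M. z ^ n / real n ^ s * esum_trunc r (n - 1))"

definition euler_sum :: "eindex \<Rightarrow> real" where
  "euler_sum idx = lim (\<lambda>M. esum_trunc idx M)"

definition zeta_stuffle :: "eindex \<Rightarrow> real poly" where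
  "zeta_stuffle idx = (THE P. (\<lambda>M. esum_trunc idx M
       - poly P (ln (real M) + euler_mascheroni)) \<longlonglongrightarrow> 0)"

text \<open>Iterated integral of a list of one-forms (given by their densities),
  read left to right: integral over u > t_1 > t_2 > ... > 0.\<close>
fun iter_int :: "(real \<Rightarrow> real) list \<Rightarrow> real \<Rightarrow> real" where
  "iter_int [] u = 1"
| "iter_int (\<omega> # ws) u = integral {0..u} (\<lambda>t. \<omega> t * iter_int ws t)"

text \<open>The word of forms (dt/t)^(s_1-1) dt/(a_1-t) ... (dt/t)^(s_d-1) dt/(a_d-t),
  with a_k = z_1 ... z_k (first argument is the running product).\<close>
fun eforms :: "real \<Rightarrow> eindex \<Rightarrow> (real \<Rightarrow> real) list" where
  "eforms a [] = []"
| "eforms a ((s, z) # r) =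
     replicate (s - 1) (\<lambda>t. 1 / t) @ [(\<lambda>t. 1 / (a * z - t))] @ eforms (a * z) r"

definition iter_int_eps :: "eindex \<Rightarrow> real \<Rightarrow> real" where
  "iter_int_eps idx \<epsilon> = iter_int (eforms 1 idx) (1 - \<epsilon>)"

definition zeta_shuffle :: "eindex \<Rightarrow> real poly" where
  "zeta_shuffle idx = (THE Q. ((\<lambda>\<epsilon>. iter_int_eps idx \<epsilon> - poly Q (- ln \<epsilon>))
       \<longlongrightarrow> 0) (at_right 0))"

definition f_w :: "nat \<Rightarrow> real \<Rightarrow> real \<Rightarrow> real" where
  "f_w w x y = (\<Sum>j = 0..w - 2. x ^ j * y ^ (w - 2 - j))"

end

theory Submission
  imports Defs "HOL-Real_Asymp.Real_Asymp"
begin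

text \<open>
  Fix signs z1, z2 and the weight w = k + 2, and put
    g(n, m) = z1^n z2^m sum_(i <= k) x^i y^(k-i) / (n^(i+1) m^(k-i+1)).
  Summing g over the square 1 <= n, m <= M and splitting it into n > m, n < m and n = m gives
  the stuffle side: truncated double sums and the diagonal term f_w(x, y) times a truncated
  single sum. Summing g over the triangle n + m <= M and using the partial fraction identity
    1 / ((n - x t) (m - y t)) = (1 / (n - x t) + 1 / (m - y t)) / ((n + m) - (x + y) t)
  in the variable N = n + m gives the shuffle side. The remaining corner of the square tends to 0.

  Every truncated double sum involved is asymptotic to a polynomial in log M + gamma, namely its
  stuffle-regularized value. For indices (a, 1), (b, z) this is also the shuffle-regularized
  value: the terms are c / n plus an absolutely summable remainder, the iterated integral is the
  power series of the terms evaluated at 1 - eps, and c / n contributes c (log M + gamma) to the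
  truncated sum and -c log eps to the integral. Comparing the asymptotic polynomials of both
  sides gives the three identities, for (z1, z2) = (1, 1), (1, -1) and (-1, -1).
\<close>

section \<open>Terms of Euler sums\<close>

fun esum_term :: "eindex \<Rightarrow> nat \<Rightarrow> real" where
  "esum_term [] n = (if n = 0 then 1 else 0)"
| "esum_term ((s, z) # r) n = z ^ n / real n ^ s * (\<Sum>m<n. esum_term r m)"

lemma esum_trunc_eq_sum_term: "esum_trunc idx M = (\<Sum>n\<le>M. esum_term idx n)"
proof (induction idx arbitrary: M)
  case Nil
  then show ?case by (simp add: sum.delta)
next
  case (Cons p r)
  obtain s z where p: "p = (s, z)" by fastforce
  have "(\<Sum>n\<le>M. esum_term ((s, z) # r) n) = (\<Sum>n=1..M. esum_term ((s, z) # r) n)"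
    by (simp add: atMost_atLeast0 sum.atLeast_Suc_atMost)
  also have "\<dots> = (\<Sum>n=1..M. z ^ n / real n ^ s * esum_trunc r (n - 1))"
    by (intro sum.cong refl) (auto simp: Cons.IH lessThan_Suc_atMost[symmetric])
  finally show ?case by (simp add: p)
qed

lemma esum_term_Cons:
  assumes "0 < s"
  shows "esum_term ((s, z) # r) n = z ^ n / real n ^ s * esum_trunc r (n - 1)"
  using assms by (cases n) (simp_all add: esum_trunc_eq_sum_term lessThan_Suc_atMost)

section \<open>Convergence of depth-one and depth-two sums\<close>

lemma harm_le_ln: "harm n \<le> ln (real n) + (1 :: real)"
  \<comment> \<open>also for n = 0, since ln 0 = 0\<close>
  using euler_mascheroni_sequence_decreasing[of 1 n] by (cases "n = 0") (simp_all add: harm_def)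

lemma abs_esum_trunc_single_le_harm:
  assumes "\<bar>z\<bar> = 1" "0 < b"
  shows "\<bar>esum_trunc [(b, z)] n\<bar> \<le> harm n"
proof -
  have "\<bar>esum_trunc [(b, z)] n\<bar> \<le> (\<Sum>k=1..n. \<bar>z ^ k / real k ^ b\<bar>)"
    unfolding esum_trunc.simps mult_1_right by (rule sum_abs)
  also have "\<dots> \<le> (\<Sum>k=1..n. inverse (real k))"
  proof (intro sum_mono)
    fix k assume "k \<in> {1..n}"
    then have "real k \<le> real k ^ b"
      using assms(2) by (simp add: Suc_leI power_increasing[of 1 b "real k", simplified])
    with \<open>k \<in> {1..n}\<close> show "\<bar>z ^ k / real k ^ b\<bar> \<le> inverse (real k)"
      by (simp add: abs_divide power_abs assms(1) field_simps)
  qed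
  finally show ?thesis by (simp add: harm_def)
qed

lemma tendsto_lim_of_tail_bound:
  fixes S :: "nat \<Rightarrow> real"
  assumes tail: "\<And>k K. k \<le> K \<Longrightarrow> \<bar>S K - S k\<bar> \<le> e k" and e: "e \<longlonglongrightarrow> 0"
  shows "S \<longlonglongrightarrow> lim S" and "\<bar>lim S - S k\<bar> \<le> e k"
proof -
  have "Cauchy S"
  proof (rule metric_CauchyI)
    fix \<epsilon> :: real assume "\<epsilon> > 0"
    then obtain N where N: "\<bar>e N\<bar> < \<epsilon> / 2"
      using LIMSEQ_D[OF e, of "\<epsilon> / 2"] by auto
    have "dist (S m) (S n) < \<epsilon>" if "N \<le> m" "N \<le> n" for m n
      using tail[OF that(1)] tail[OF that(2)] N by (simp add: dist_real_def)
    then show "\<exists>N. \<forall>m\<ge>N. \<forall>n\<ge>N. dist (S m) (S n) < \<epsilon>" by blast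
  qed
  then show S: "S \<longlonglongrightarrow> lim S"
    by (simp add: Cauchy_convergent_iff convergent_LIMSEQ_iff)
  have "(\<lambda>K. \<bar>S K - S k\<bar>) \<longlonglongrightarrow> \<bar>lim S - S k\<bar>"
    by (intro tendsto_intros S)
  then show "\<bar>lim S - S k\<bar> \<le> e k"
    by (rule LIMSEQ_le_const2) (use tail in auto)
qed

lemma alternating_sum_bounds:
  fixes f :: "nat \<Rightarrow> real"
  assumes "\<And>n. 0 \<le> f n" "\<And>n. f (Suc n) \<le> f n"
  shows "0 \<le> (\<Sum>j<K. (-1) ^ j * f (s + j)) \<and> (\<Sum>j<K. (-1) ^ j * f (s + j)) \<le> f s"
proof (induction K arbitrary: s)
  case 0
  then show ?case using assms by simp
next
  case (Suc K)
  have "(\<Sum>j<Suc K. (-1) ^ j * f (s + j)) = f s - (\<Sum>j<K. (-1) ^ j * f (Suc s + j))"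
    unfolding sum.lessThan_Suc_shift by (simp add: sum_negf del: sum.lessThan_Suc)
  then show ?case using Suc[of "Suc s"] assms[of s] by auto
qed

lemma sum_inverse_power_shift_le:
  assumes "2 \<le> b"
  shows "(\<Sum>j<N. 1 / real (Suc k + j) ^ b) \<le> 2 / real (Suc k)"
proof -
  have "(\<Sum>j<N. 1 / real (Suc k + j) ^ b) \<le> (\<Sum>j<N. 2 / real (Suc k + j) - 2 / real (Suc (Suc k + j)))"
  proof (intro sum_mono)
    fix j
    define m where "m = real (Suc k + j)"
    have "m \<ge> 1" by (simp add: m_def)
    then have "1 / m ^ b \<le> 1 / m ^ 2" using assms by (intro divide_left_mono power_increasing) auto
    also have "\<dots> \<le> 2 / m - 2 / (m + 1)"
    proof -
      have "m * (m + 1) \<le> 2 * m ^ 2" using \<open>m \<ge> 1\<close> by (simp add: power2_eq_square algebra_simps)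
      moreover have "2 / m - 2 / (m + 1) = 2 / (m * (m + 1))" using \<open>m \<ge> 1\<close> by (simp add: field_simps)
      ultimately show ?thesis using \<open>m \<ge> 1\<close> by (simp add: divide_simps)
    qed
    finally show "1 / real (Suc k + j) ^ b \<le> 2 / real (Suc k + j) - 2 / real (Suc (Suc k + j))"
      by (simp add: m_def add_ac)
  qed
  also have "\<dots> = 2 / real (Suc k) - 2 / real (Suc k + N)"
    using sum_lessThan_telescope'[of "\<lambda>j. 2 / real (Suc k + j)" N] by simp
  also have "\<dots> \<le> 2 / real (Suc k)" by simp
  finally show ?thesis .
qed

lemma esum_trunc_single_tail:
  assumes "\<bar>z\<bar> = 1" "0 < b" "(b, z) \<noteq> (1, 1)" "k \<le> K"
  shows "\<bar>esum_trunc [(b, z)] K - esum_trunc [(b, z)] k\<bar> \<le> 2 / real (Suc k)"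
proof -
  have "{1..K} = {1..k} \<union> {Suc k..K}" "{1..k} \<inter> {Suc k..K} = {}" using assms(4) by auto
  then have "esum_trunc [(b, z)] K - esum_trunc [(b, z)] k = (\<Sum>n\<in>{Suc k..K}. z ^ n / real n ^ b)"
    by (simp add: sum.union_disjoint)
  also have "\<dots> = (\<Sum>j<K - k. z ^ (Suc k + j) / real (Suc k + j) ^ b)"
    using assms(4) by (intro sum.reindex_bij_witness[of _ "\<lambda>j. Suc k + j" "\<lambda>n. n - Suc k"]) auto
  finally have diff: "esum_trunc [(b, z)] K - esum_trunc [(b, z)] k = \<dots>" .
  consider "z = -1" | "z = 1" "2 \<le> b" using assms(1-3) by (cases "z \<ge> 0") auto
  then show ?thesis
  proof cases
    case 1
    define f where "f j = 1 / real (Suc j) ^ b" for j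
    have "esum_trunc [(b, z)] K - esum_trunc [(b, z)] k = (-1) ^ Suc k * (\<Sum>j<K - k. (-1) ^ j * f (k + j))"
      unfolding diff by (simp add: 1 f_def power_add sum_distrib_left)
    then have "\<bar>esum_trunc [(b, z)] K - esum_trunc [(b, z)] k\<bar> = \<bar>\<Sum>j<K - k. (-1) ^ j * f (k + j)\<bar>"
      by (simp add: abs_mult)
    also have "\<dots> \<le> f k"
      using alternating_sum_bounds[where f = f and K = "K - k" and s = k] by (auto simp: f_def frac_le power_mono)
    also have "\<dots> \<le> 2 / real (Suc k)"
      using power_increasing[of 1 b "real (Suc k)"] assms(2) by (simp add: f_def frac_le)
    finally show ?thesis .
  next
    case 2
    then show ?thesis
      unfolding diff using sum_inverse_power_shift_le[where N = "K - k" and k = k] by (simp add: sum_nonneg)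
  qed
qed

lemma esum_trunc_single_tendsto:
  assumes "\<bar>z\<bar> = 1" "0 < b" "(b, z) \<noteq> (1, 1)"
  shows "esum_trunc [(b, z)] \<longlonglongrightarrow> euler_sum [(b, z)]"
    and "\<bar>euler_sum [(b, z)] - esum_trunc [(b, z)] k\<bar> \<le> 2 / real (Suc k)"
proof -
  have "(\<lambda>k. 2 / real (Suc k)) \<longlonglongrightarrow> 0" by real_asymp
  from tendsto_lim_of_tail_bound[OF esum_trunc_single_tail[OF assms] this]
  show "esum_trunc [(b, z)] \<longlonglongrightarrow> euler_sum [(b, z)]"
    and "\<bar>euler_sum [(b, z)] - esum_trunc [(b, z)] k\<bar> \<le> 2 / real (Suc k)"
    by (simp_all only: euler_sum_def)
qed

lemma summable_ln_over_square: "summable (\<lambda>n. (ln (real n) + 1) / real n ^ 2)"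
proof (rule summable_comparison_test_bigo)
  show "summable (\<lambda>n. norm (real n powr (-3/2)))" by (simp add: summable_real_powr_iff)
  show "(\<lambda>n. (ln (real n) + 1) / real n ^ 2) \<in> O(\<lambda>n. real n powr (-3/2))" by real_asymp
qed

lemma summable_abs_esum_term_depth2:
  assumes "2 \<le> a" "0 < b" "\<bar>z1\<bar> = 1" "\<bar>z2\<bar> = 1"
  shows "summable (\<lambda>n. \<bar>esum_term [(a, z1), (b, z2)] n\<bar>)"
proof (rule summable_comparison_test'[OF summable_ln_over_square, of 0])
  fix n :: nat
  show "norm \<bar>esum_term [(a, z1), (b, z2)] n\<bar> \<le> (ln (real n) + 1) / real n ^ 2"
  proof (cases "n = 0")
    case False
    have "\<bar>esum_term [(a, z1), (b, z2)] n\<bar> = \<bar>esum_trunc [(b, z2)] (n - 1)\<bar> / real n ^ a"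
      using assms(1) by (subst esum_term_Cons) (simp_all add: abs_mult power_abs assms(3))
    also have "\<dots> \<le> harm n / real n ^ 2"
    proof (rule frac_le)
      show "\<bar>esum_trunc [(b, z2)] (n - 1)\<bar> \<le> harm n"
        using order_trans[OF abs_esum_trunc_single_le_harm[OF assms(4,2)] harm_mono[of "n - 1" n]] by simp
      show "real n ^ 2 \<le> real n ^ a" using False assms(1) by (intro power_increasing) auto
    qed (use False in \<open>auto simp: harm_nonneg\<close>)
    also have "\<dots> \<le> (ln (real n) + 1) / real n ^ 2"
      by (intro divide_right_mono harm_le_ln) simp
    finally show ?thesis by simp
  qed (use assms(1) in simp)
qed

lemma esum_term_depth2_decomposition:
  assumes "0 < a" "0 < b" "\<bar>z1\<bar> = 1" "\<bar>z2\<bar> = 1" "2 \<le> a \<or> (b, z2) \<noteq> (1, 1)"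
  obtains c r where "\<And>n. esum_term [(a, z1), (b, z2)] n = c * z1 ^ n / real n + r n"
    and "summable (\<lambda>n. \<bar>r n\<bar>)"
proof (cases "2 \<le> a")
  case True
  then show ?thesis
    using summable_abs_esum_term_depth2[OF True assms(2-4)] by (intro that[of 0]) auto
next
  case False
  then have a: "a = 1" and bz: "(b, z2) \<noteq> (1, 1)" using assms(1,5) by auto
  define Z where "Z = euler_sum [(b, z2)]"
  define r where "r n = z1 ^ n * (esum_trunc [(b, z2)] (n - 1) - Z) / real n" for n
  have "esum_term [(a, z1), (b, z2)] n = Z * z1 ^ n / real n + r n" for n
    unfolding a by (subst esum_term_Cons) (simp_all add: r_def diff_divide_distrib algebra_simps del: esum_trunc.simps)
  moreover have "summable (\<lambda>n. \<bar>r n\<bar>)"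
  proof (rule summable_comparison_test')
    show "summable (\<lambda>n. 2 * inverse (real n ^ 2))"
      by (intro summable_mult inverse_power_summable) auto
    fix n :: nat
    show "norm \<bar>r n\<bar> \<le> 2 * inverse (real n ^ 2)"
    proof (cases "n = 0")
      case False
      have "\<bar>r n\<bar> = \<bar>Z - esum_trunc [(b, z2)] (n - 1)\<bar> / real n"
        by (simp add: r_def abs_mult abs_divide power_abs assms(3) abs_minus_commute del: esum_trunc.simps)
      also have "\<dots> \<le> (2 / real n) / real n"
        using esum_trunc_single_tendsto(2)[OF assms(4,2) bz, of "n - 1"] False
        by (intro divide_right_mono) (simp_all add: Z_def del: esum_trunc.simps)
      finally show ?thesis by (simp add: power2_eq_square divide_inverse)
    qed (simp add: r_def)
  qed
  ultimately show ?thesis by (rule that)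
qed

lemma summable_alternating_harmonic: "summable (\<lambda>n. (-1) ^ n / real n)"
proof -
  have "summable (\<lambda>n. - ((-1) ^ n / real (Suc n)))"
    using sums_summable[OF alternating_harmonic_series_sums] by (rule summable_minus)
  then show ?thesis by (subst summable_Suc_iff[symmetric]) simp
qed

lemma esum_trunc_tendsto_of_decomposition:
  assumes term_eq: "\<And>n. esum_term idx n = c * (-1) ^ n / real n + r n"
    and r: "summable (\<lambda>n. \<bar>r n\<bar>)"
  shows "esum_trunc idx \<longlonglongrightarrow> euler_sum idx"
proof -
  have "esum_trunc idx = (\<lambda>M. c * (\<Sum>n\<le>M. (-1) ^ n / real n) + (\<Sum>n\<le>M. r n))"
    by (simp add: fun_eq_iff esum_trunc_eq_sum_term term_eq sum.distrib sum_distrib_left)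
  also have "\<dots> \<longlonglongrightarrow> c * (\<Sum>n. (-1) ^ n / real n) + suminf r"
    by (intro tendsto_intros summable_LIMSEQ' summable_alternating_harmonic summable_rabs_cancel[OF r])
  finally have "convergent (esum_trunc idx)" by (rule convergentI)
  then show ?thesis by (simp add: euler_sum_def convergent_LIMSEQ_iff)
qed

section \<open>Asymptotic polynomials and the stuffle regularization\<close>

definition asymp_poly :: "(nat \<Rightarrow> real) \<Rightarrow> real poly \<Rightarrow> bool" where
  "asymp_poly f P \<longleftrightarrow> (\<lambda>M. f M - poly P (ln (real M) + euler_mascheroni)) \<longlonglongrightarrow> 0"

lemma poly_eq_0_if_tendsto_0:
  fixes p :: "real poly"
  assumes f: "filterlim f at_top F" and F: "F \<noteq> bot" and lim: "((\<lambda>t. poly p (f t)) \<longlongrightarrow> 0) F"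
  shows "p = 0"
  using lim
proof (induction p rule: pCons_induct)
  case (pCons c q)
  then have "((\<lambda>t. c + f t * poly q (f t)) \<longlongrightarrow> 0) F" by simp
  then have "((\<lambda>t. (c + f t * poly q (f t)) * inverse (f t) - c * inverse (f t)) \<longlongrightarrow> 0 * 0 - c * 0) F"
    by (intro tendsto_intros tendsto_inverse_0_at_top f)
  moreover have "eventually (\<lambda>t. (c + f t * poly q (f t)) * inverse (f t) - c * inverse (f t) = poly q (f t)) F"
    using filterlim_at_top_dense[THEN iffD1, OF f, rule_format, of 0]
    by eventually_elim (simp add: field_simps)
  ultimately have "((\<lambda>t. poly q (f t)) \<longlongrightarrow> 0) F"
    by (simp add: tendsto_cong)
  then have "q = 0" by (rule pCons.IH)
  with pCons.prems have "((\<lambda>t. c) \<longlongrightarrow> 0) F" by simp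
  then have "c = 0" using F tendsto_const_iff by blast
  with \<open>q = 0\<close> show ?case by simp
qed simp

lemma asymp_poly_unique:
  assumes "asymp_poly f P" "asymp_poly f Q"
  shows "P = Q"
proof -
  have at_top: "filterlim (\<lambda>M. ln (real M) + euler_mascheroni) at_top sequentially" by real_asymp
  have "(\<lambda>M. (f M - poly Q (ln (real M) + euler_mascheroni)) - (f M - poly P (ln (real M) + euler_mascheroni)))
      \<longlonglongrightarrow> 0 - 0"
    using assms unfolding asymp_poly_def by (intro tendsto_diff)
  then have "(\<lambda>M. poly (P - Q) (ln (real M) + euler_mascheroni)) \<longlonglongrightarrow> 0" by simp
  then have "P - Q = 0" by (rule poly_eq_0_if_tendsto_0[OF at_top sequentially_bot])
  then show ?thesis by simp
qed

lemma asymp_poly_const: "f \<longlonglongrightarrow> c \<Longrightarrow> asymp_poly f [:c:]"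
  by (simp add: asymp_poly_def LIM_zero)

lemma asymp_poly_add: "asymp_poly f P \<Longrightarrow> asymp_poly g Q \<Longrightarrow> asymp_poly (\<lambda>M. f M + g M) (P + Q)"
  unfolding asymp_poly_def by (drule (1) tendsto_add) (simp add: algebra_simps)

lemma asymp_poly_smult: "asymp_poly f P \<Longrightarrow> asymp_poly (\<lambda>M. c * f M) (smult c P)"
  unfolding asymp_poly_def by (drule tendsto_mult_right_zero[of _ _ c]) (simp add: algebra_simps)

lemma asymp_poly_sum:
  "(\<And>i. i \<in> I \<Longrightarrow> asymp_poly (f i) (P i))
    \<Longrightarrow> asymp_poly (\<lambda>M. \<Sum>i\<in>I. f i M) (\<Sum>i\<in>I. P i)"
proof (induction I rule: infinite_finite_induct)
  case (insert i I)
  then show ?case by (simp add: asymp_poly_add)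
qed (simp_all add: asymp_poly_def)

lemma asymp_poly_transfer: "asymp_poly f P \<Longrightarrow> (\<lambda>M. f M - g M) \<longlonglongrightarrow> 0 \<Longrightarrow> asymp_poly g P"
  unfolding asymp_poly_def by (drule (1) tendsto_diff) (simp add: algebra_simps)

lemma zeta_stuffle_eqI: "asymp_poly (esum_trunc idx) P \<Longrightarrow> zeta_stuffle idx = P"
  unfolding zeta_stuffle_def asymp_poly_def[symmetric] using asymp_poly_unique by blast

lemma asymp_poly_of_decomposition:
  assumes term_eq: "\<And>n. esum_term idx n = c / real n + r n"
    and r: "summable (\<lambda>n. \<bar>r n\<bar>)"
  shows "asymp_poly (esum_trunc idx) [:suminf r, c:]"
proof -
  have "(\<Sum>n\<le>M. c / real n) = c * harm M" for M
    by (simp add: harm_def atMost_atLeast0 sum.atLeast_Suc_atMost divide_inverse sum_distrib_left)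
  then have "(\<lambda>M. esum_trunc idx M - poly [:suminf r, c:] (ln (real M) + euler_mascheroni))
      = (\<lambda>M. c * (harm M - ln (real M) - euler_mascheroni) + ((\<Sum>n\<le>M. r n) - suminf r))"
    by (simp add: fun_eq_iff esum_trunc_eq_sum_term term_eq sum.distrib algebra_simps)
  also have "\<dots> \<longlonglongrightarrow> c * (euler_mascheroni - euler_mascheroni) + (suminf r - suminf r)"
    by (intro tendsto_intros euler_mascheroni_LIMSEQ summable_LIMSEQ' summable_rabs_cancel[OF r])
  finally show ?thesis by (simp add: asymp_poly_def)
qed

section \<open>Iterated integrals as power series\<close>

text \<open>Bounded coefficients keep the radius of convergence at least 1 through every integration.\<close>

definition iter_int_powser :: "(real \<Rightarrow> real) list \<Rightarrow> (nat \<Rightarrow> real) \<Rightarrow> bool" where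
  "iter_int_powser ws c \<longleftrightarrow>
     (\<forall>n. \<bar>c n\<bar> \<le> 1) \<and> (\<forall>u. 0 \<le> u \<and> u < 1 \<longrightarrow> iter_int ws u = (\<Sum>n. c n * u ^ n))"

lemma summable_bounded_powser:
  fixes c :: "nat \<Rightarrow> real"
  assumes "\<And>n. \<bar>c n\<bar> \<le> 1" "\<bar>u\<bar> < 1"
  shows "summable (\<lambda>n. norm (c n * u ^ n))"
proof (rule summable_comparison_test'[of "\<lambda>n. \<bar>u\<bar> ^ n" 0])
  show "summable (\<lambda>n. \<bar>u\<bar> ^ n)" using assms(2) by (simp add: summable_geometric)
  show "norm (norm (c n * u ^ n)) \<le> \<bar>u\<bar> ^ n" for n
    using mult_right_mono[OF assms(1)[of n], of "\<bar>u\<bar> ^ n"] by (simp add: abs_mult power_abs)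
qed

lemma iter_int_powser_Cons:
  assumes ws: "iter_int_powser ws c" and d: "\<And>n. \<bar>d n\<bar> \<le> 1" "d 0 = 0"
    and deriv: "\<And>x. 0 < x \<Longrightarrow> x < 1 \<Longrightarrow> (\<Sum>n. diffs d n * x ^ n) = \<omega> x * (\<Sum>n. c n * x ^ n)"
  shows "iter_int_powser (\<omega> # ws) d"
  unfolding iter_int_powser_def
proof (intro conjI allI impI)
  fix u :: real assume u: "0 \<le> u \<and> u < 1"
  define F where "F x = (\<Sum>n. d n * x ^ n)" for x :: real
  have F_deriv: "(F has_real_derivative (\<Sum>n. diffs d n * x ^ n)) (at x)" if "\<bar>x\<bar> < 1" for x
    unfolding F_def
  proof (rule termdiffs_strong)
    show "summable (\<lambda>n. d n * ((1 + \<bar>x\<bar>) / 2) ^ n)"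
      using summable_bounded_powser[OF d(1), of "(1 + \<bar>x\<bar>) / 2"] that by (simp add: summable_norm_cancel)
  qed (use that in auto)
  \<comment> \<open>the derivative is only needed on the open interval, so a pole of \<omega> at 0 does no harm\<close>
  have "((\<lambda>t. \<omega> t * iter_int ws t) has_integral (F u - F 0)) {0..u}"
  proof (rule fundamental_theorem_of_calculus_interior)
    show "continuous_on {0..u} F"
      by (rule continuous_at_imp_continuous_on) (use u in \<open>auto intro!: DERIV_isCont F_deriv\<close>)
    fix x assume "x \<in> {0<..<u}"
    with u ws have "0 < x" "x < 1" "iter_int ws x = (\<Sum>n. c n * x ^ n)"
      by (auto simp: iter_int_powser_def)
    with F_deriv[of x] deriv[of x] show "(F has_vector_derivative \<omega> x * iter_int ws x) (at x)"
      by (simp add: has_real_derivative_iff_has_vector_derivative)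
  qed (use u in simp)
  moreover have "F 0 = 0" using d(2) by (simp add: F_def)
  ultimately show "iter_int (\<omega> # ws) u = (\<Sum>n. d n * u ^ n)"
    by (simp add: integral_unique F_def)
qed (use d in simp)

lemma iter_int_powser_Nil: "iter_int_powser [] (\<lambda>n. if n = 0 then 1 else 0)"
  unfolding iter_int_powser_def
proof (intro conjI allI impI)
  fix u :: real
  have "(\<lambda>n. (if n = 0 then 1 else 0) * u ^ n) = (\<lambda>n. if n = 0 then (\<lambda>_. 1 :: real) n else 0)"
    by auto
  with sums_single[of 0 "\<lambda>_. 1 :: real"] show "iter_int [] u = (\<Sum>n. (if n = 0 then 1 else 0) * u ^ n)"
    by (simp add: sums_iff)
qed simp

lemma iter_int_powser_Cons_inverse:
  assumes ws: "iter_int_powser ws c" and c0: "c 0 = 0"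
  shows "iter_int_powser ((\<lambda>t. 1 / t) # ws) (\<lambda>n. c n / real n)"
proof (rule iter_int_powser_Cons[OF ws])
  have c: "\<bar>c n\<bar> \<le> 1" for n using ws by (simp add: iter_int_powser_def)
  show "\<bar>c n / real n\<bar> \<le> 1" for n
    using c[of n] by (cases n) (auto simp: abs_divide divide_le_eq intro: order_trans)
  fix x :: real assume x: "0 < x" "x < 1"
  have "(\<lambda>n. c n * x ^ n) sums (\<Sum>n. c n * x ^ n)"
    using summable_bounded_powser[OF c, of x] x by (simp add: summable_norm_cancel summable_sums)
  then have "(\<lambda>n. c (Suc n) * x ^ Suc n) sums (\<Sum>n. c n * x ^ n)"
    using c0 by (subst sums_Suc_iff) simp
  from sums_mult[OF this, of "1 / x"] x
  have "(\<lambda>n. c (Suc n) * x ^ n) sums (1 / x * (\<Sum>n. c n * x ^ n))"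
    by (simp add: field_simps)
  then show "(\<Sum>n. diffs (\<lambda>n. c n / real n) n * x ^ n) = 1 / x * (\<Sum>n. c n * x ^ n)"
    by (simp add: diffs_def sums_iff)
qed simp

lemma iter_int_powser_replicate_inverse:
  assumes ws: "iter_int_powser ws c" and c0: "c 0 = 0"
  shows "iter_int_powser (replicate k (\<lambda>t. 1 / t) @ ws) (\<lambda>n. c n / real n ^ k)"
proof (induction k)
  case (Suc k)
  from iter_int_powser_Cons_inverse[OF Suc] c0 show ?case
    by (simp add: field_simps)
qed (use ws in simp)

lemma sums_pole:
  fixes a x :: real
  assumes "\<bar>a\<bar> = 1" "\<bar>x\<bar> < 1"
  shows "(\<lambda>k. a ^ Suc k * x ^ k) sums (1 / (a - x))"
proof -
  have "a * a = 1" using assms(1) by (cases "a \<ge> 0") auto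
  then have "1 - a * x = a * (a - x)" by (simp add: algebra_simps)
  moreover have "(\<lambda>k. a * (a * x) ^ k) sums (a * (1 / (1 - a * x)))"
    using assms by (intro sums_mult geometric_sums) (simp add: abs_mult)
  ultimately show ?thesis using assms(1) by (auto simp: power_mult_distrib mult.assoc)
qed

lemma iter_int_powser_Cons_pole:
  assumes ws: "iter_int_powser ws c" and a: "\<bar>a\<bar> = 1"
  shows "iter_int_powser ((\<lambda>t. 1 / (a - t)) # ws) (\<lambda>n. a ^ n / real n * (\<Sum>m<n. c m / a ^ m))"
proof (rule iter_int_powser_Cons[OF ws])
  have c: "\<bar>c n\<bar> \<le> 1" for n using ws by (simp add: iter_int_powser_def)
  show "\<bar>a ^ n / real n * (\<Sum>m<n. c m / a ^ m)\<bar> \<le> 1" for n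
  proof (cases "n = 0")
    case False
    have "\<bar>\<Sum>m<n. c m / a ^ m\<bar> \<le> (\<Sum>m<n. 1)"
      by (rule order_trans[OF sum_abs sum_mono]) (simp add: power_abs a c)
    with False show ?thesis by (simp add: abs_mult power_abs a divide_le_eq)
  qed simp
  show "a ^ 0 / real 0 * (\<Sum>m<0. c m / a ^ m) = 0" by simp
  fix x :: real assume x: "0 < x" "x < 1"
  have geom: "(\<Sum>k. a ^ Suc k * x ^ k) = 1 / (a - x)"
    using x by (intro sums_unique[symmetric] sums_pole a) simp
  have "summable (\<lambda>k. norm (c k * x ^ k))"
    using x by (intro summable_bounded_powser c) simp
  moreover have "summable (\<lambda>k. norm (a ^ Suc k * x ^ k))"
    using x by (intro summable_bounded_powser) (simp_all add: abs_mult power_abs a)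
  ultimately have "(\<Sum>k. c k * x ^ k) * (\<Sum>k. a ^ Suc k * x ^ k)
      = (\<Sum>k. \<Sum>i\<le>k. (c i * x ^ i) * (a ^ Suc (k - i) * x ^ (k - i)))"
    by (rule Cauchy_product)
  also have "\<dots> = (\<Sum>k. diffs (\<lambda>n. a ^ n / real n * (\<Sum>m<n. c m / a ^ m)) k * x ^ k)"
  proof (rule suminf_cong)
    fix k
    have "(c i * x ^ i) * (a ^ Suc (k - i) * x ^ (k - i)) = a ^ Suc k * (c i / a ^ i) * x ^ k"
      if "i \<le> k" for i
    proof -
      have "a ^ Suc (k - i) = a ^ Suc k / a ^ i" "x ^ i * x ^ (k - i) = x ^ k"
        using a that by (auto simp: power_diff Suc_diff_le simp flip: power_add)
      then show ?thesis by (simp add: field_simps)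
    qed
    then show "(\<Sum>i\<le>k. (c i * x ^ i) * (a ^ Suc (k - i) * x ^ (k - i)))
        = diffs (\<lambda>n. a ^ n / real n * (\<Sum>m<n. c m / a ^ m)) k * x ^ k"
      by (simp add: diffs_def lessThan_Suc_atMost sum_distrib_left sum_distrib_right)
  qed
  finally show "(\<Sum>n. diffs (\<lambda>n. a ^ n / real n * (\<Sum>m<n. c m / a ^ m)) n * x ^ n)
      = 1 / (a - x) * (\<Sum>n. c n * x ^ n)"
    by (subst (asm) geom) (simp add: mult.commute)
qed

text \<open>The running sign a of eforms only twists the n-th coefficient by a^n.\<close>

lemma iter_int_powser_eforms:
  assumes "\<bar>a\<bar> = 1" "\<forall>(s, z) \<in> set idx. 0 < s \<and> \<bar>z\<bar> = 1"
  shows "iter_int_powser (eforms a idx) (\<lambda>n. a ^ n * esum_term idx n)"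
  using assms
proof (induction idx arbitrary: a)
  case Nil
  have "(\<lambda>n. a ^ n * esum_term [] n) = (\<lambda>n. if n = 0 then 1 else 0)"
    by (simp add: fun_eq_iff)
  then show ?case using iter_int_powser_Nil by simp
next
  case (Cons p r)
  obtain s z where p: "p = (s, z)" and s: "0 < s" and z: "\<bar>z\<bar> = 1"
    using Cons.prems(2) by (cases p) auto
  have az: "\<bar>a * z\<bar> = 1" and nz: "a \<noteq> 0" "z \<noteq> 0" using Cons.prems(1) z by (auto simp: abs_mult)
  have "iter_int_powser ((\<lambda>t. 1 / (a * z - t)) # eforms (a * z) r)
      (\<lambda>n. (a * z) ^ n / real n * (\<Sum>m<n. esum_term r m))"
    using iter_int_powser_Cons_pole[OF Cons.IH[OF az] az] Cons.prems(2) nz by simp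
  from iter_int_powser_replicate_inverse[OF this, of "s - 1"]
  show ?case
    using s by (simp add: p power_mult_distrib field_simps power_Suc[symmetric] Suc_diff_le)
qed

lemma iter_int_eps_eq_powser:
  assumes "\<forall>(s, z) \<in> set idx. 0 < s \<and> \<bar>z\<bar> = 1" "0 < \<epsilon>" "\<epsilon> \<le> 1"
  shows "iter_int_eps idx \<epsilon> = (\<Sum>n. esum_term idx n * (1 - \<epsilon>) ^ n)"
  using iter_int_powser_eforms[of 1 idx] assms by (simp add: iter_int_powser_def iter_int_eps_def)

section \<open>The shuffle regularization\<close>

lemma zeta_shuffle_eqI:
  assumes "((\<lambda>\<epsilon>. iter_int_eps idx \<epsilon> - poly P (- ln \<epsilon>)) \<longlongrightarrow> 0) (at_right 0)"
  shows "zeta_shuffle idx = P"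
  unfolding zeta_shuffle_def
proof (rule the_equality)
  fix Q assume Q: "((\<lambda>\<epsilon>. iter_int_eps idx \<epsilon> - poly Q (- ln \<epsilon>)) \<longlongrightarrow> 0) (at_right 0)"
  have at_top: "filterlim (\<lambda>\<epsilon>::real. - ln \<epsilon>) at_top (at_right 0)" by real_asymp
  have "((\<lambda>\<epsilon>. (iter_int_eps idx \<epsilon> - poly P (- ln \<epsilon>)) - (iter_int_eps idx \<epsilon> - poly Q (- ln \<epsilon>)))
      \<longlongrightarrow> 0 - 0) (at_right 0)"
    by (intro tendsto_diff assms Q)
  then have "((\<lambda>\<epsilon>. poly (Q - P) (- ln \<epsilon>)) \<longlongrightarrow> 0) (at_right 0)" by simp
  from poly_eq_0_if_tendsto_0[OF at_top _ this] have "Q - P = 0" by simp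
  then show "Q = P" by simp
qed (rule assms)

lemma tendsto_powser_at_one:
  fixes c :: "nat \<Rightarrow> real"
  assumes "summable (\<lambda>n. \<bar>c n\<bar>)"
  shows "((\<lambda>\<epsilon>. \<Sum>n. c n * (1 - \<epsilon>) ^ n) \<longlongrightarrow> suminf c) (at_right 0)"
proof -
  define g where "g u = (\<Sum>n. c n * u ^ n)" for u :: real
  have "uniform_limit {0..1} (\<lambda>N u. \<Sum>n<N. c n * u ^ n) g sequentially"
    unfolding g_def
  proof (rule Weierstrass_m_test[OF _ assms])
    fix n and u :: real assume "u \<in> {0..1}"
    then show "norm (c n * u ^ n) \<le> \<bar>c n\<bar>"
      using mult_left_mono[of "u ^ n" 1 "\<bar>c n\<bar>"] by (simp add: abs_mult power_le_one)
  qed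
  moreover have "\<forall>\<^sub>F N in sequentially. continuous_on {0..1} (\<lambda>u. \<Sum>n<N. c n * u ^ n)"
    by (intro always_eventually allI continuous_intros)
  ultimately have "continuous_on {0..1} g"
    by (intro uniform_limit_theorem) auto
  then have "continuous_on {0..1} (\<lambda>\<epsilon>. g (1 - \<epsilon>))"
    by (rule continuous_on_compose2) (auto intro!: continuous_intros)
  then have "((\<lambda>\<epsilon>. g (1 - \<epsilon>)) \<longlongrightarrow> g (1 - 0)) (at_right 0)"
    by (rule continuous_on_Icc_at_rightD) simp
  then show ?thesis by (simp add: g_def)
qed

lemma iter_int_eps_asymp_of_decomposition:
  assumes idx: "\<forall>(s, z) \<in> set idx. 0 < s \<and> \<bar>z\<bar> = 1"
    and term_eq: "\<And>n. esum_term idx n = c / real n + r n"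
    and r: "summable (\<lambda>n. \<bar>r n\<bar>)"
  shows "((\<lambda>\<epsilon>. iter_int_eps idx \<epsilon> - poly [:suminf r, c:] (- ln \<epsilon>)) \<longlongrightarrow> 0) (at_right 0)"
proof -
  have "iter_int_eps idx \<epsilon> - poly [:suminf r, c:] (- ln \<epsilon>) = (\<Sum>n. r n * (1 - \<epsilon>) ^ n) - suminf r"
    if "0 < \<epsilon>" "\<epsilon> < 1" for \<epsilon> :: real
  proof -
    have "(\<lambda>n. (1 - \<epsilon>) ^ n / real n) sums (- ln \<epsilon>)"
      using ln_series'[of "\<epsilon> - 1"] sums_minus that by fastforce
    moreover have "summable (\<lambda>n. r n * (1 - \<epsilon>) ^ n)"
      by (rule summable_comparison_test'[OF r, of 0]) (use that in \<open>auto simp: abs_mult power_le_one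
        intro: mult_left_le\<close>)
    ultimately have "(\<lambda>n. c * ((1 - \<epsilon>) ^ n / real n) + r n * (1 - \<epsilon>) ^ n)
        sums (c * (- ln \<epsilon>) + (\<Sum>n. r n * (1 - \<epsilon>) ^ n))"
      by (intro sums_add sums_mult summable_sums)
    then show ?thesis
      using iter_int_eps_eq_powser[OF idx, of \<epsilon>] that
      by (simp add: term_eq sums_iff algebra_simps)
  qed
  then have "eventually (\<lambda>\<epsilon>. (\<Sum>n. r n * (1 - \<epsilon>) ^ n) - suminf r
      = iter_int_eps idx \<epsilon> - poly [:suminf r, c:] (- ln \<epsilon>)) (at_right 0)"
    using eventually_at_right_real[of 0 1] by (auto elim: eventually_mono)
  moreover have "((\<lambda>\<epsilon>. (\<Sum>n. r n * (1 - \<epsilon>) ^ n) - suminf r) \<longlongrightarrow> suminf r - suminf r) (at_right 0)"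
    by (intro tendsto_diff tendsto_powser_at_one r tendsto_const)
  ultimately show ?thesis by (simp add: Lim_transform_eventually)
qed

lemma regularizations_of_decomposition:
  assumes "\<forall>(s, z) \<in> set idx. 0 < s \<and> \<bar>z\<bar> = 1"
    and "\<And>n. esum_term idx n = c / real n + r n" "summable (\<lambda>n. \<bar>r n\<bar>)"
  shows "zeta_shuffle idx = zeta_stuffle idx" and "asymp_poly (esum_trunc idx) (zeta_stuffle idx)"
proof -
  have "asymp_poly (esum_trunc idx) [:suminf r, c:]"
    using assms(2,3) by (rule asymp_poly_of_decomposition)
  moreover from this have "zeta_stuffle idx = [:suminf r, c:]" by (rule zeta_stuffle_eqI)
  moreover have "zeta_shuffle idx = [:suminf r, c:]"
    by (rule zeta_shuffle_eqI) (use iter_int_eps_asymp_of_decomposition[OF assms] in simp)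
  ultimately show "zeta_shuffle idx = zeta_stuffle idx" "asymp_poly (esum_trunc idx) (zeta_stuffle idx)"
    by simp_all
qed

lemma regularizations_depth2:
  assumes "0 < a" "0 < b" "\<bar>z\<bar> = 1" "2 \<le> a \<or> (b, z) \<noteq> (1, 1)"
  shows "zeta_shuffle [(a, 1), (b, z)] = zeta_stuffle [(a, 1), (b, z)]"
    and "asymp_poly (esum_trunc [(a, 1), (b, z)]) (zeta_stuffle [(a, 1), (b, z)])"
proof -
  obtain c r where "\<And>n. esum_term [(a, 1), (b, z)] n = c * 1 ^ n / real n + r n"
    and "summable (\<lambda>n. \<bar>r n\<bar>)"
    using esum_term_depth2_decomposition[of a b 1 z] assms by auto
  with regularizations_of_decomposition[of "[(a, 1), (b, z)]" c r] assms
  show "zeta_shuffle [(a, 1), (b, z)] = zeta_stuffle [(a, 1), (b, z)]"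
    and "asymp_poly (esum_trunc [(a, 1), (b, z)]) (zeta_stuffle [(a, 1), (b, z)])"
    by auto
qed

lemma esum_trunc_depth2_alternating_tendsto:
  assumes "0 < a" "0 < b" "\<bar>z\<bar> = 1" "2 \<le> a \<or> (b, z) \<noteq> (1, 1)"
  shows "esum_trunc [(a, -1), (b, z)] \<longlonglongrightarrow> euler_sum [(a, -1), (b, z)]"
proof -
  obtain c r where "\<And>n. esum_term [(a, -1), (b, z)] n = c * (-1) ^ n / real n + r n"
    and "summable (\<lambda>n. \<bar>r n\<bar>)"
    using esum_term_depth2_decomposition[of a b "-1" z] assms by auto
  then show ?thesis by (rule esum_trunc_tendsto_of_decomposition)
qed

section \<open>The double shuffle relation\<close>

text \<open>frac_gen k x y p q is the coefficient of t^k in 1 / ((p - x t) (q - y t)).\<close>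

definition frac_gen :: "nat \<Rightarrow> real \<Rightarrow> real \<Rightarrow> real \<Rightarrow> real \<Rightarrow> real" where
  "frac_gen k x y p q = (\<Sum>i\<le>k. x ^ i * y ^ (k - i) / (p ^ Suc i * q ^ Suc (k - i)))"

lemma frac_gen_Suc:
  assumes "p \<noteq> 0" "q \<noteq> 0"
  shows "(p + q) * frac_gen (Suc k) x y p q
    = y ^ Suc k / q ^ Suc (Suc k) + x ^ Suc k / p ^ Suc (Suc k) + (x + y) * frac_gen k x y p q"
proof -
  have "p * frac_gen (Suc k) x y p q = y ^ Suc k / q ^ Suc (Suc k) + x * frac_gen k x y p q"
    using assms unfolding frac_gen_def
    by (subst sum.atMost_Suc_shift) (simp add: sum_distrib_left field_simps)
  moreover have "q * frac_gen (Suc k) x y p q = x ^ Suc k / p ^ Suc (Suc k) + y * frac_gen k x y p q"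
    using assms unfolding frac_gen_def
    by (subst sum.atMost_Suc) (simp add: sum_distrib_left Suc_diff_le field_simps)
  ultimately show ?thesis by (simp add: algebra_simps)
qed

lemma frac_gen_partial_fractions:
  assumes "p \<noteq> 0" "q \<noteq> 0" "p + q \<noteq> 0"
  shows "frac_gen k x y p q = (\<Sum>i\<le>k. (x + y) ^ i / (p + q) ^ Suc i
    * (y ^ (k - i) / q ^ Suc (k - i) + x ^ (k - i) / p ^ Suc (k - i)))"
proof (induction k)
  case 0
  then show ?case using assms by (simp add: frac_gen_def field_simps)
next
  case (Suc k)
  have "frac_gen (Suc k) x y p q = (y ^ Suc k / q ^ Suc (Suc k) + x ^ Suc k / p ^ Suc (Suc k)) / (p + q)
      + (x + y) / (p + q) * frac_gen k x y p q"
    using frac_gen_Suc[OF assms(1,2), of k x y] assms(3)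
    by (simp add: eq_divide_eq add_divide_distrib[symmetric] mult.commute)
  then show ?case
    unfolding sum.atMost_Suc_shift
    by (simp add: Suc.IH sum_distrib_left mult_ac del: sum.atMost_Suc)
qed

lemma frac_gen_swap: "frac_gen k y x q p = frac_gen k x y p q"
  unfolding frac_gen_def
  by (rule sum.reindex_bij_witness[of _ "\<lambda>i. k - i" "\<lambda>i. k - i"]; auto simp: mult.commute)

lemma frac_gen_diag: "frac_gen k x y p p = f_w (Suc (Suc k)) x y / p ^ Suc (Suc k)"
  unfolding frac_gen_def f_w_def sum_divide_distrib atLeast0AtMost
  by (intro sum.cong refl) (auto simp flip: power_add)

abbreviation lower_pairs :: "nat \<Rightarrow> (nat \<times> nat) set" where
  "lower_pairs M \<equiv> {(n, m) \<in> {1..M} \<times> {1..M}. m < n}"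

abbreviation triangle_pairs :: "nat \<Rightarrow> (nat \<times> nat) set" where
  "triangle_pairs M \<equiv> {(n, m) \<in> {1..M} \<times> {1..M}. n + m \<le> M}"

abbreviation corner_pairs :: "nat \<Rightarrow> (nat \<times> nat) set" where
  "corner_pairs M \<equiv> {(n, m) \<in> {1..M} \<times> {1..M}. M < n + m}"

lemma esum_trunc_depth2_pairs:
  "esum_trunc [(a, z), (b, z')] M
    = (\<Sum>(n, m) \<in> lower_pairs M. z ^ n * z' ^ m / (real n ^ a * real m ^ b))"
proof -
  have "lower_pairs M = Sigma {1..M} (\<lambda>n. {1..n - 1})" by auto
  then show ?thesis
    by (simp add: sum.Sigma[symmetric] sum_distrib_left field_simps)
qed

lemma weighted_sum_esum_trunc_depth2:
  "(\<Sum>i\<le>k. c i * esum_trunc [(Suc i, z), (Suc (k - i), z')] M)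
    = (\<Sum>(n, m) \<in> lower_pairs M.
         z ^ n * z' ^ m * (\<Sum>i\<le>k. c i / (real n ^ Suc i * real m ^ Suc (k - i))))"
  unfolding esum_trunc_depth2_pairs sum_distrib_left
  by (subst sum.swap) (simp add: case_prod_unfold sum_distrib_left mult_ac)

lemma sum_square_split:
  fixes h :: "nat \<Rightarrow> nat \<Rightarrow> 'a::comm_monoid_add"
  shows "(\<Sum>(n, m) \<in> {1..M} \<times> {1..M}. h n m)
    = (\<Sum>(n, m) \<in> lower_pairs M. h n m)
    + (\<Sum>(n, m) \<in> lower_pairs M. h m n) + (\<Sum>n=1..M. h n n)"
proof -
  define L where "L = lower_pairs M"
  have square: "{1..M} \<times> {1..M} = (L \<union> prod.swap ` L) \<union> (\<lambda>n. (n, n)) ` {1..M}"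
    by (auto simp: L_def image_iff)
  have "finite L" by (rule finite_subset[of _ "{1..M} \<times> {1..M}"]) (auto simp: L_def)
  then have "(\<Sum>(n, m) \<in> {1..M} \<times> {1..M}. h n m)
      = (\<Sum>(n, m) \<in> L. h n m) + (\<Sum>p \<in> prod.swap ` L. case_prod h p)
        + (\<Sum>p \<in> (\<lambda>n. (n, n)) ` {1..M}. case_prod h p)"
    unfolding square by (subst sum.union_disjoint, auto simp: L_def)+
  also have "(\<Sum>p \<in> prod.swap ` L. case_prod h p) = (\<Sum>(n, m) \<in> L. h m n)"
    by (simp add: sum.reindex case_prod_unfold)
  also have "(\<Sum>p \<in> (\<lambda>n. (n, n)) ` {1..M}. case_prod h p) = (\<Sum>n=1..M. h n n)"
    by (simp add: sum.reindex inj_on_def)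
  finally show ?thesis by (simp add: L_def)
qed

lemma sum_triangle_reindex:
  fixes F :: "nat \<Rightarrow> nat \<Rightarrow> 'a::comm_monoid_add"
  shows "(\<Sum>(n, m) \<in> triangle_pairs M. F (n + m) m)
      = (\<Sum>(n, m) \<in> lower_pairs M. F n m)"
    and "(\<Sum>(n, m) \<in> triangle_pairs M. F (n + m) n)
      = (\<Sum>(n, m) \<in> lower_pairs M. F n m)"
  by (rule sum.reindex_bij_witness[where i = "\<lambda>(N, j). (N - j, j)" and j = "\<lambda>(n, m). (n + m, m)"]; force)
     (rule sum.reindex_bij_witness[where i = "\<lambda>(N, j). (j, N - j)" and j = "\<lambda>(n, m). (n + m, n)"]; force)

lemma square_sum_eq_stuffle:
  "(\<Sum>(n, m) \<in> {1..M} \<times> {1..M}. z1 ^ n * z2 ^ m * frac_gen k x y n m)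
    = (\<Sum>i\<le>k. x ^ i * y ^ (k - i) * esum_trunc [(Suc i, z1), (Suc (k - i), z2)] M)
    + (\<Sum>i\<le>k. y ^ i * x ^ (k - i) * esum_trunc [(Suc i, z2), (Suc (k - i), z1)] M)
    + f_w (Suc (Suc k)) x y * esum_trunc [(Suc (Suc k), z1 * z2)] M"
proof -
  have below: "(\<Sum>i\<le>k. x ^ i * y ^ (k - i) * esum_trunc [(Suc i, u), (Suc (k - i), v)] M)
      = (\<Sum>(n, m) \<in> lower_pairs M. u ^ n * v ^ m * frac_gen k x y n m)"
    for x y u v by (simp only: weighted_sum_esum_trunc_depth2 frac_gen_def)
  have diag: "(\<Sum>n=1..M. z1 ^ n * z2 ^ n * frac_gen k x y n n)
      = f_w (Suc (Suc k)) x y * esum_trunc [(Suc (Suc k), z1 * z2)] M"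
    by (simp add: frac_gen_diag sum_distrib_left power_mult_distrib mult_ac)
  show ?thesis
    unfolding sum_square_split below diag by (simp add: frac_gen_swap mult_ac)
qed

lemma sign_power_mult_self:
  fixes z :: real
  assumes "\<bar>z\<bar> = 1"
  shows "z ^ n * z ^ n = 1"
proof -
  have "z * z = 1" using abs_mult_self_eq[of z] assms by simp
  then show ?thesis by (metis power_mult_distrib power_one)
qed

lemma triangle_sum_eq_shuffle:
  assumes "\<bar>z1\<bar> = 1" "\<bar>z2\<bar> = 1"
  shows "(\<Sum>(n, m) \<in> triangle_pairs M. z1 ^ n * z2 ^ m * frac_gen k x y n m)
    = (\<Sum>i\<le>k. (x + y) ^ i * y ^ (k - i) * esum_trunc [(Suc i, z1), (Suc (k - i), z1 * z2)] M)
    + (\<Sum>i\<le>k. (x + y) ^ i * x ^ (k - i) * esum_trunc [(Suc i, z2), (Suc (k - i), z1 * z2)] M)"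
proof -
  define F where "F u v N j = u ^ N * (z1 * z2) ^ j * (\<Sum>i\<le>k. (x + y) ^ i * v ^ (k - i)
      / (real N ^ Suc i * real j ^ Suc (k - i)))" for u v :: real and N j :: nat
  have split: "z1 ^ n * z2 ^ m * frac_gen k x y n m = F z1 y (n + m) m + F z2 x (n + m) n"
    if "0 < n" "0 < m" for n m
  proof -
    define S where "S v j = (\<Sum>i\<le>k. (x + y) ^ i * v ^ (k - i) / (real (n + m) ^ Suc i * real j ^ Suc (k - i)))"
      for v j
    have "frac_gen k x y n m = S y m + S x n"
      using frac_gen_partial_fractions[of "real n" "real m" k x y] that
      by (simp add: S_def sum.distrib[symmetric] ring_distribs)
    moreover have "z1 ^ n * z2 ^ m = z1 ^ (n + m) * (z1 * z2) ^ m"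
      using sign_power_mult_self[OF assms(1), of m] by (simp add: power_add power_mult_distrib mult_ac)
    moreover have "z1 ^ n * z2 ^ m = z2 ^ (n + m) * (z1 * z2) ^ n"
      using sign_power_mult_self[OF assms(2), of n] by (simp add: power_add power_mult_distrib mult_ac)
    ultimately show ?thesis
      by (simp add: F_def S_def distrib_left)
  qed
  have "(\<Sum>(n, m) \<in> triangle_pairs M. z1 ^ n * z2 ^ m * frac_gen k x y n m)
      = (\<Sum>(n, m) \<in> triangle_pairs M. F z1 y (n + m) m + F z2 x (n + m) n)"
    by (rule sum.cong) (auto simp: split)
  also have "\<dots> = (\<Sum>(n, m) \<in> triangle_pairs M. F z1 y (n + m) m)
      + (\<Sum>(n, m) \<in> triangle_pairs M. F z2 x (n + m) n)"
    by (simp only: case_prod_unfold sum.distrib)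
  also have "\<dots> = (\<Sum>(n, m) \<in> lower_pairs M. F z1 y n m)
      + (\<Sum>(n, m) \<in> lower_pairs M. F z2 x n m)"
    by (simp only: sum_triangle_reindex)
  finally show ?thesis
    by (simp only: weighted_sum_esum_trunc_depth2 F_def)
qed

lemma inverse_power_prod_le:
  assumes "0 < a" "0 < b" "3 \<le> a + b" "0 < n" "0 < m"
  shows "1 / (real n ^ a * real m ^ b) \<le> 1 / (real n ^ 2 * real m) + 1 / (real n * real m ^ 2)"
proof -
  have n: "1 \<le> real n" and m: "1 \<le> real m" using assms(4,5) by auto
  consider "2 \<le> a" | "2 \<le> b" using assms(3) by linarith
  then show ?thesis
  proof cases
    case 1
    then have "real n ^ 2 * real m \<le> real n ^ a * real m ^ b"
      using n m assms(2) by (intro mult_mono power_increasing) (auto intro: order_trans[OF _ power_increasing[of 1 b]])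
    then have "1 / (real n ^ a * real m ^ b) \<le> 1 / (real n ^ 2 * real m)"
      using n m by (intro divide_left_mono) auto
    then show ?thesis by (simp add: add_increasing2)
  next
    case 2
    then have "real n * real m ^ 2 \<le> real n ^ a * real m ^ b"
      using n m assms(1) by (intro mult_mono power_increasing) (auto intro: order_trans[OF _ power_increasing[of 1 a]])
    then have "1 / (real n ^ a * real m ^ b) \<le> 1 / (real n * real m ^ 2)"
      using n m by (intro divide_left_mono) auto
    then show ?thesis by (simp add: add_increasing)
  qed
qed

lemma abs_frac_gen_le:
  assumes "1 \<le> k" "0 < n" "0 < m"
  shows "\<bar>frac_gen k x y n m\<bar>
    \<le> f_w (Suc (Suc k)) \<bar>x\<bar> \<bar>y\<bar> * (1 / (real n ^ 2 * real m) + 1 / (real n * real m ^ 2))"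
proof -
  have "\<bar>frac_gen k x y n m\<bar>
      \<le> (\<Sum>i\<le>k. \<bar>x\<bar> ^ i * \<bar>y\<bar> ^ (k - i) * (1 / (real n ^ Suc i * real m ^ Suc (k - i))))"
    unfolding frac_gen_def by (rule order_trans[OF sum_abs]) (simp add: abs_mult abs_divide power_abs)
  also have "\<dots>
      \<le> (\<Sum>i\<le>k. \<bar>x\<bar> ^ i * \<bar>y\<bar> ^ (k - i) * (1 / (real n ^ 2 * real m) + 1 / (real n * real m ^ 2)))"
    using assms by (intro sum_mono mult_left_mono inverse_power_prod_le) auto
  finally show ?thesis
    by (simp add: f_w_def atLeast0AtMost sum_distrib_right)
qed

lemma corner_sum_le:
  "(\<Sum>(n, m) \<in> corner_pairs M. 1 / (real n ^ 2 * real m)) \<le> 2 * harm M / (real M + 1)"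
proof -
  have "corner_pairs M = Sigma {1..M} (\<lambda>n. {Suc M - n..M})" by auto
  then have "(\<Sum>(n, m) \<in> corner_pairs M. 1 / (real n ^ 2 * real m))
      = (\<Sum>n=1..M. \<Sum>m=Suc M - n..M. 1 / (real n ^ 2 * real m))"
    by (simp add: sum.Sigma)
  also have "\<dots> \<le> (\<Sum>n=1..M. 1 / real n + 1 / real (Suc M - n)) / (real M + 1)"
    unfolding sum_divide_distrib
  proof (intro sum_mono)
    fix n assume n: "n \<in> {1..M}"
    then have "(\<Sum>m=Suc M - n..M. 1 / (real n ^ 2 * real m)) \<le> (\<Sum>m=Suc M - n..M. 1 / (real n ^ 2 * real (Suc M - n)))"
      by (intro sum_mono divide_left_mono mult_left_mono) auto
    also have "\<dots> = 1 / (real n * real (Suc M - n))"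
      using n by (simp add: power2_eq_square)
    also have "\<dots> = (1 / real n + 1 / real (Suc M - n)) / (real n + real (Suc M - n))"
    proof -
      have "1 / real n + 1 / real (Suc M - n) = (real n + real (Suc M - n)) / (real n * real (Suc M - n))"
        using n by (simp add: field_simps)
      then show ?thesis using n by simp
    qed
    also have "real n + real (Suc M - n) = real M + 1"
      using n by (simp add: of_nat_diff)
    finally show "(\<Sum>m=Suc M - n..M. 1 / (real n ^ 2 * real m)) \<le> (1 / real n + 1 / real (Suc M - n)) / (real M + 1)" .
  qed
  also have "(\<Sum>n=1..M. 1 / real n + 1 / real (Suc M - n)) = harm M + harm M"
  proof -
    have "(\<Sum>n=1..M. 1 / real n) = harm M" by (simp add: harm_def divide_inverse)
    moreover from this have "(\<Sum>n=1..M. 1 / real (Suc M - n)) = harm M"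
      using sum.atLeastAtMost_rev[of "\<lambda>n. 1 / real n" 1 M] by (simp add: Suc_diff_le)
    ultimately show ?thesis by (simp only: sum.distrib)
  qed
  finally show ?thesis by simp
qed

lemma corner_sum_tendsto_0:
  assumes "1 \<le> k" "\<bar>z1\<bar> = 1" "\<bar>z2\<bar> = 1"
  shows "(\<lambda>M. \<Sum>(n, m) \<in> corner_pairs M. z1 ^ n * z2 ^ m * frac_gen k x y n m) \<longlonglongrightarrow> 0"
proof (rule Lim_null_comparison)
  define B where "B = f_w (Suc (Suc k)) \<bar>x\<bar> \<bar>y\<bar>"
  have "(\<lambda>M. (ln (real M) + 1) / (real M + 1)) \<longlonglongrightarrow> 0" by real_asymp
  then show "(\<lambda>M. 4 * B * ((ln (real M) + 1) / (real M + 1))) \<longlonglongrightarrow> 0"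
    by (rule tendsto_mult_right_zero)
  show "\<forall>\<^sub>F M in sequentially. norm (\<Sum>(n, m) \<in> corner_pairs M. z1 ^ n * z2 ^ m * frac_gen k x y n m)
      \<le> 4 * B * ((ln (real M) + 1) / (real M + 1))"
  proof (intro always_eventually allI)
    fix M
    define C :: "(nat \<times> nat) set" where "C = corner_pairs M"
    have B: "0 \<le> B" by (simp add: B_def f_w_def sum_nonneg)
    have swap: "(\<Sum>(n, m) \<in> C. 1 / (real n * real m ^ 2)) = (\<Sum>(n, m) \<in> C. 1 / (real n ^ 2 * real m))"
      by (rule sum.reindex_bij_witness[of _ prod.swap prod.swap]) (auto simp: C_def)
    have "norm (\<Sum>(n, m) \<in> C. z1 ^ n * z2 ^ m * frac_gen k x y n m)
        \<le> (\<Sum>(n, m) \<in> C. B * (1 / (real n ^ 2 * real m) + 1 / (real n * real m ^ 2)))"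
      unfolding case_prod_unfold real_norm_def
      by (rule order_trans[OF sum_abs sum_mono])
        (auto simp: C_def B_def abs_mult power_abs assms(2,3) intro!: abs_frac_gen_le assms(1))
    also have "\<dots> = B * ((\<Sum>(n, m) \<in> C. 1 / (real n ^ 2 * real m))
        + (\<Sum>(n, m) \<in> C. 1 / (real n * real m ^ 2)))"
      by (simp add: case_prod_unfold sum.distrib sum_distrib_left distrib_left)
    also have "\<dots> = 2 * B * (\<Sum>(n, m) \<in> C. 1 / (real n ^ 2 * real m))"
      unfolding swap by simp
    also have "\<dots> \<le> 2 * B * (2 * harm M / (real M + 1))"
      using corner_sum_le[of M] B by (intro mult_left_mono) (simp_all add: C_def)
    also have "\<dots> \<le> 4 * B * ((ln (real M) + 1) / (real M + 1))"
      using harm_le_ln[of M] B by (simp add: mult_left_mono divide_right_mono)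
    finally show "norm (\<Sum>(n, m) \<in> corner_pairs M. z1 ^ n * z2 ^ m * frac_gen k x y n m)
      \<le> 4 * B * ((ln (real M) + 1) / (real M + 1))" by (simp add: C_def)
  qed
qed

definition shuffle_sum :: "nat \<Rightarrow> real \<Rightarrow> real \<Rightarrow> real \<Rightarrow> real \<Rightarrow> nat \<Rightarrow> real" where
  "shuffle_sum w z1 z2 x y M = (\<Sum>a = 1..w - 1.
      (x + y) ^ (a - 1) * y ^ (w - a - 1) * esum_trunc [(a, z1), (w - a, z1 * z2)] M
    + (x + y) ^ (a - 1) * x ^ (w - a - 1) * esum_trunc [(a, z2), (w - a, z1 * z2)] M)"

definition stuffle_sum :: "nat \<Rightarrow> real \<Rightarrow> real \<Rightarrow> real \<Rightarrow> real \<Rightarrow> nat \<Rightarrow> real" where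
  "stuffle_sum w z1 z2 x y M = (\<Sum>a = 1..w - 1.
      x ^ (a - 1) * y ^ (w - a - 1) * esum_trunc [(a, z1), (w - a, z2)] M
    + y ^ (a - 1) * x ^ (w - a - 1) * esum_trunc [(a, z2), (w - a, z1)] M)
    + f_w w x y * esum_trunc [(w, z1 * z2)] M"

lemma double_shuffle_truncated:
  assumes "3 \<le> w" "\<bar>z1\<bar> = 1" "\<bar>z2\<bar> = 1"
  shows "(\<lambda>M. shuffle_sum w z1 z2 x y M - stuffle_sum w z1 z2 x y M) \<longlonglongrightarrow> 0"
proof -
  define k where "k = w - 2"
  have w: "w = Suc (Suc k)" and k: "1 \<le> k" using assms(1) by (auto simp: k_def)
  have reindex: "(\<Sum>a = 1..w - 1. G a) = (\<Sum>i\<le>k. G (Suc i))" for G :: "nat \<Rightarrow> real"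
    unfolding w by (simp only: One_nat_def diff_Suc_Suc diff_zero sum.atLeast_Suc_atMost_Suc_shift
      atLeast0AtMost comp_def)
  have exps: "Suc (Suc k) - Suc i = Suc (k - i)" "Suc i - 1 = i" "Suc (k - i) - 1 = k - i"
    if "i \<in> {..k}" for i
    using that by auto
  define g where "g n m = z1 ^ n * z2 ^ m * frac_gen k x y n m" for n m :: nat
  have shuffle: "shuffle_sum w z1 z2 x y M = (\<Sum>(n, m) \<in> triangle_pairs M. g n m)" for M
    unfolding shuffle_sum_def g_def triangle_sum_eq_shuffle[OF assms(2,3)] reindex sum.distrib[symmetric]
    by (intro sum.cong refl) (simp only: w exps)
  have stuffle: "stuffle_sum w z1 z2 x y M = (\<Sum>(n, m) \<in> {1..M} \<times> {1..M}. g n m)" for M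
    unfolding stuffle_sum_def g_def square_sum_eq_stuffle reindex sum.distrib[symmetric]
    by (intro arg_cong2[where f = "(+)"] sum.cong refl) (simp_all only: exps w)
  have corner: "(\<Sum>(n, m) \<in> {1..M} \<times> {1..M}. g n m)
      = (\<Sum>(n, m) \<in> triangle_pairs M. g n m) + (\<Sum>(n, m) \<in> corner_pairs M. g n m)" for M
  proof -
    have "triangle_pairs M \<union> corner_pairs M = {1..M} \<times> {1..M}"
      by auto
    moreover have "(\<Sum>(n, m) \<in> triangle_pairs M \<union> corner_pairs M. g n m)
      = (\<Sum>(n, m) \<in> triangle_pairs M. g n m) + (\<Sum>(n, m) \<in> corner_pairs M. g n m)"
      by (intro sum.union_disjoint) (auto intro: finite_subset[of _ "{1..M} \<times> {1..M}"])
    ultimately show ?thesis by simp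
  qed
  show ?thesis
    unfolding shuffle stuffle corner g_def
    using tendsto_minus[OF corner_sum_tendsto_0[OF k assms(2,3), of x y]] by simp
qed

lemma double_shuffle_asymp_poly:
  assumes w: "3 \<le> w" and z: "\<bar>z1\<bar> = 1" "\<bar>z2\<bar> = 1"
    and A: "\<And>a. a \<in> {1..w - 1} \<Longrightarrow> asymp_poly (esum_trunc [(a, z1), (w - a, z1 * z2)]) (A a)"
    and B: "\<And>a. a \<in> {1..w - 1} \<Longrightarrow> asymp_poly (esum_trunc [(a, z2), (w - a, z1 * z2)]) (B a)"
    and C: "\<And>a. a \<in> {1..w - 1} \<Longrightarrow> asymp_poly (esum_trunc [(a, z1), (w - a, z2)]) (C a)"
    and D: "\<And>a. a \<in> {1..w - 1} \<Longrightarrow> asymp_poly (esum_trunc [(a, z2), (w - a, z1)]) (D a)"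
    and E: "esum_trunc [(w, z1 * z2)] \<longlonglongrightarrow> E"
  shows "(\<Sum>a = 1..w - 1. smult ((x + y) ^ (a - 1) * y ^ (w - a - 1)) (A a)
                        + smult ((x + y) ^ (a - 1) * x ^ (w - a - 1)) (B a))
    = (\<Sum>a = 1..w - 1. smult (x ^ (a - 1) * y ^ (w - a - 1)) (C a)
                      + smult (y ^ (a - 1) * x ^ (w - a - 1)) (D a)) + [:E * f_w w x y:]"
proof (rule asymp_poly_unique[of "shuffle_sum w z1 z2 x y"])
  show "asymp_poly (shuffle_sum w z1 z2 x y) (\<Sum>a = 1..w - 1. smult ((x + y) ^ (a - 1) * y ^ (w - a - 1)) (A a)
                        + smult ((x + y) ^ (a - 1) * x ^ (w - a - 1)) (B a))"
    unfolding shuffle_sum_def[abs_def] by (intro asymp_poly_sum asymp_poly_add asymp_poly_smult A B)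
  have "(\<lambda>M. f_w w x y * esum_trunc [(w, z1 * z2)] M) \<longlonglongrightarrow> E * f_w w x y"
    using tendsto_mult_left[OF E, of "f_w w x y"] by (simp add: mult.commute)
  then have "asymp_poly (stuffle_sum w z1 z2 x y) ((\<Sum>a = 1..w - 1. smult (x ^ (a - 1) * y ^ (w - a - 1)) (C a)
                      + smult (y ^ (a - 1) * x ^ (w - a - 1)) (D a)) + [:E * f_w w x y:])"
    unfolding stuffle_sum_def[abs_def]
    by (intro asymp_poly_add asymp_poly_sum asymp_poly_smult asymp_poly_const C D)
  then show "asymp_poly (shuffle_sum w z1 z2 x y) ((\<Sum>a = 1..w - 1. smult (x ^ (a - 1) * y ^ (w - a - 1)) (C a)
                      + smult (y ^ (a - 1) * x ^ (w - a - 1)) (D a)) + [:E * f_w w x y:])"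
    by (rule asymp_poly_transfer) (use tendsto_minus[OF double_shuffle_truncated[OF w z, of x y]] in simp)
qed

lemma regularized_double_zeta_relation:
  fixes w :: nat and x y :: real
  assumes "3 \<le> w"
  shows
   "(\<Sum>a = 1..w - 1. smult ((x + y) ^ (a - 1) * (y ^ (w - a - 1) + x ^ (w - a - 1)))
        (zeta_shuffle [(a, 1), (w - a, 1)]))
    = (\<Sum>a = 1..w - 1. smult (x ^ (a - 1) * y ^ (w - a - 1) + y ^ (a - 1) * x ^ (w - a - 1))
        (zeta_stuffle [(a, 1), (w - a, 1)]))
      + [: euler_sum [(w, 1)] * f_w w x y :]"
proof -
  let ?Z = "\<lambda>a. zeta_stuffle [(a, 1), (w - a, 1)]"
  have "(\<Sum>a = 1..w - 1. smult ((x + y) ^ (a - 1) * y ^ (w - a - 1)) (?Z a)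
                      + smult ((x + y) ^ (a - 1) * x ^ (w - a - 1)) (?Z a))
    = (\<Sum>a = 1..w - 1. smult (x ^ (a - 1) * y ^ (w - a - 1)) (?Z a)
                      + smult (y ^ (a - 1) * x ^ (w - a - 1)) (?Z a))
      + [:euler_sum [(w, 1)] * f_w w x y:]"
    by (rule double_shuffle_asymp_poly[of w 1 1])
      (use assms in \<open>auto intro!: regularizations_depth2(2) esum_trunc_single_tendsto(1)\<close>)
  moreover have "zeta_shuffle [(a, 1), (w - a, 1)] = ?Z a" if "a \<in> {1..w - 1}" for a
    using that assms by (intro regularizations_depth2(1)) auto
  ultimately show ?thesis by (simp add: smult_add_left distrib_left sum.distrib)
qed

lemma regularized_mixed_euler_sum_relation:
  fixes w :: nat and x y :: real
  assumes "3 \<le> w"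
  shows
   "(\<Sum>a = 1..w - 1. smult ((x + y) ^ (a - 1) * y ^ (w - a - 1))
        (zeta_shuffle [(a, 1), (w - a, -1)])
      + [: (x + y) ^ (a - 1) * euler_sum [(a, -1), (w - a, -1)] * x ^ (w - a - 1) :])
    = (\<Sum>a = 1..w - 1. smult (x ^ (a - 1) * y ^ (w - a - 1))
        (zeta_stuffle [(a, 1), (w - a, -1)])
      + [: euler_sum [(a, -1), (w - a, 1)] * y ^ (a - 1) * x ^ (w - a - 1) :])
      + [: euler_sum [(w, -1)] * f_w w x y :]"
proof -
  let ?Z = "\<lambda>a. zeta_stuffle [(a, 1), (w - a, -1)]"
  have "(\<Sum>a = 1..w - 1. smult ((x + y) ^ (a - 1) * y ^ (w - a - 1)) (?Z a)
                      + smult ((x + y) ^ (a - 1) * x ^ (w - a - 1)) [:euler_sum [(a, -1), (w - a, -1)]:])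
    = (\<Sum>a = 1..w - 1. smult (x ^ (a - 1) * y ^ (w - a - 1)) (?Z a)
                      + smult (y ^ (a - 1) * x ^ (w - a - 1)) [:euler_sum [(a, -1), (w - a, 1)]:])
      + [:euler_sum [(w, -1)] * f_w w x y:]"
    by (rule double_shuffle_asymp_poly[of w 1 "-1"])
      (use assms in \<open>auto intro!: regularizations_depth2(2) asymp_poly_const
        esum_trunc_depth2_alternating_tendsto esum_trunc_single_tendsto(1)\<close>)
  moreover have "zeta_shuffle [(a, 1), (w - a, -1)] = ?Z a" if "a \<in> {1..w - 1}" for a
    using that assms by (intro regularizations_depth2(1)) auto
  ultimately show ?thesis by (simp add: mult_ac)
qed

lemma alternating_euler_sum_relation:
  fixes w :: nat and x y :: real
  assumes "3 \<le> w"
  shows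
   "(\<Sum>a = 1..w - 1. euler_sum [(a, -1), (w - a, 1)]
        * (x + y) ^ (a - 1) * (y ^ (w - a - 1) + x ^ (w - a - 1)))
    = (\<Sum>a = 1..w - 1. euler_sum [(a, -1), (w - a, -1)]
        * (x ^ (a - 1) * y ^ (w - a - 1) + y ^ (a - 1) * x ^ (w - a - 1)))
      + euler_sum [(w, 1)] * f_w w x y"
proof -
  have "(\<Sum>a = 1..w - 1. smult ((x + y) ^ (a - 1) * y ^ (w - a - 1)) [:euler_sum [(a, -1), (w - a, 1)]:]
                      + smult ((x + y) ^ (a - 1) * x ^ (w - a - 1)) [:euler_sum [(a, -1), (w - a, 1)]:])
    = (\<Sum>a = 1..w - 1. smult (x ^ (a - 1) * y ^ (w - a - 1)) [:euler_sum [(a, -1), (w - a, -1)]:]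
                      + smult (y ^ (a - 1) * x ^ (w - a - 1)) [:euler_sum [(a, -1), (w - a, -1)]:])
      + [:euler_sum [(w, 1)] * f_w w x y:]"
    by (rule double_shuffle_asymp_poly[of w "-1" "-1"])
      (use assms in \<open>auto intro!: asymp_poly_const esum_trunc_depth2_alternating_tendsto
        esum_trunc_single_tendsto(1)\<close>)
  from arg_cong[OF this, of "\<lambda>p. coeff p 0"] show ?thesis
    by (simp add: coeff_sum distrib_left sum.distrib mult_ac)
qed

theorem proposition4p1:
  fixes w :: nat and x y :: real
  assumes "w \<ge> 3"
  shows
   "(\<Sum>a = 1..w - 1. smult ((x + y) ^ (a - 1) * (y ^ (w - a - 1) + x ^ (w - a - 1)))
        (zeta_shuffle [(a, 1), (w - a, 1)]))
    = (\<Sum>a = 1..w - 1. smult (x ^ (a - 1) * y ^ (w - a - 1) + y ^ (a - 1) * x ^ (w - a - 1))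
        (zeta_stuffle [(a, 1), (w - a, 1)]))
      + [: euler_sum [(w, 1)] * f_w w x y :]
   \<and>
   (\<Sum>a = 1..w - 1. smult ((x + y) ^ (a - 1) * y ^ (w - a - 1))
        (zeta_shuffle [(a, 1), (w - a, -1)])
      + [: (x + y) ^ (a - 1) * euler_sum [(a, -1), (w - a, -1)] * x ^ (w - a - 1) :])
    = (\<Sum>a = 1..w - 1. smult (x ^ (a - 1) * y ^ (w - a - 1))
        (zeta_stuffle [(a, 1), (w - a, -1)])
      + [: euler_sum [(a, -1), (w - a, 1)] * y ^ (a - 1) * x ^ (w - a - 1) :])
      + [: euler_sum [(w, -1)] * f_w w x y :]
   \<and>
   (\<Sum>a = 1..w - 1. euler_sum [(a, -1), (w - a, 1)]
        * (x + y) ^ (a - 1) * (y ^ (w - a - 1) + x ^ (w - a - 1)))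
    = (\<Sum>a = 1..w - 1. euler_sum [(a, -1), (w - a, -1)]
        * (x ^ (a - 1) * y ^ (w - a - 1) + y ^ (a - 1) * x ^ (w - a - 1)))
      + euler_sum [(w, 1)] * f_w w x y"
  using regularized_double_zeta_relation[OF assms] regularized_mixed_euler_sum_relation[OF assms]
    alternating_euler_sum_relation[OF assms] by blast

end
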